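(* The product of any collection of mild mixing systems is mild mixing: if $(X_i,T_i)$, $i\in I$, are mild mixing, then the product system $(\prod_{i\in I}X_i,\prod_{i\in I}T_i)$ is mild mixing.
   Context: A dynamical system $(X,T)$ consists of a compact metric space $X$ and a homeomorphism $T:X\to X$. $\mathbb N=\{1,2,\dots\}$; for $U,V\subset X$, $N(U,V)=\{n\in\mathbb N:T^n(U)\cap V\ne\emptyset\}$. For a finite $F\subset\mathbb Z$, $\sigma_F$ is the sum of its elements ($\sigma_\emptyset=0$); for $A\subset\mathbb Z$, $IP(A)=\{\sigma_F:F\subset A \text{ finite}\}$ and $SIP(A)=\{a-b:a,b\in IP(A)\}$. A set $B\subset\mathbb N$ is an SIP set if $SIP(A)\cap\mathbb N\subset B$ for some infinite $A\subset\mathbb N$. A system $(X,T)$ is mild mixing if for all nonempty open $U,V\subset X$, the set $N(U,V)$ has nonempty intersection with every SIP set. *)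

theory Defs
  imports "HOL-Analysis.Analysis"
begin

definition dyn_system :: "'a topology \<Rightarrow> ('a \<Rightarrow> 'a) \<Rightarrow> bool" where
  "dyn_system X T \<longleftrightarrow> compact_space X \<and> metrizable_space X \<and> homeomorphic_map X X T"

definition return_times :: "('a \<Rightarrow> 'a) \<Rightarrow> 'a set \<Rightarrow> 'a set \<Rightarrow> nat set" where
  "return_times T U V = {n. n \<ge> 1 \<and> (T ^^ n) ` U \<inter> V \<noteq> {}}"

definition IP :: "int set \<Rightarrow> int set" where
  "IP A = {\<Sum>F | F. F \<subseteq> A \<and> finite F}"

definition SIP :: "int set \<Rightarrow> int set" where
  "SIP A = {a - b | a b. a \<in> IP A \<and> b \<in> IP A}"

definition SIP_set :: "nat set \<Rightarrow> bool" where
  "SIP_set B \<longleftrightarrow> (\<exists>A::nat set. infinite A \<and> A \<subseteq> {1..} \<and>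
      {n::nat. n \<ge> 1 \<and> int n \<in> SIP (int ` A)} \<subseteq> B)"

text \<open>Mild mixing property (topological part; the system conditions are in dyn_system).\<close>
definition mild_mixing :: "'a topology \<Rightarrow> ('a \<Rightarrow> 'a) \<Rightarrow> bool" where
  "mild_mixing X T \<longleftrightarrow> (\<forall>U V. openin X U \<and> openin X V \<and> U \<noteq> {} \<and> V \<noteq> {} \<longrightarrow>
      (\<forall>B. SIP_set B \<longrightarrow> return_times T U V \<inter> B \<noteq> {}))"

definition prod_map :: "'i set \<Rightarrow> ('i \<Rightarrow> 'a \<Rightarrow> 'a) \<Rightarrow> ('i \<Rightarrow> 'a) \<Rightarrow> ('i \<Rightarrow> 'a)" where
  "prod_map I T x = (\<lambda>i\<in>I. T i (x i))"

end

theory Submission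
  imports Defs
begin

text \<open>
  A basic open set of the product constrains only finitely many coordinates, so by induction on
  their number it suffices to show: if (Y, S) is mild mixing and R is a family of sets of times,
  each meeting every SIP set, such that k \<in> R m implies m + k \<in> R 0, then R 0 \<inter> N(U, V) meets
  every SIP set B.

  Thin the generator of B to a lacunary set C (each element exceeds twice the sum of the smaller
  ones). Mild mixing gives n0 \<in> N(U, V) \<inter> SIP(C); put W0 = U \<inter> S^-n0(V) and choose recursively a
  return time b_k of W_k in the SIP set of a fresh block of C, setting W_(k+1) = W_k \<inter> S^-b_k(W_k).
  A point of W_K visits W0 at every finite sum of b_0, ..., b_(K-1), so every difference of such
  sums is a return time of W0. Lacunarity makes the b_k increasing, so they generate an SIP set,
  which contains some k \<in> R n0. Then n0 + k lies in R 0, in N(U, V) and, the blocks being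
  disjoint, in SIP(C) \<subseteq> B.
\<close>

lemma SIP_iff_disjoint:
  "x \<in> SIP A \<longleftrightarrow>
    (\<exists>F G. F \<subseteq> A \<and> G \<subseteq> A \<and> finite F \<and> finite G \<and> F \<inter> G = {} \<and> x = \<Sum>F - \<Sum>G)"
proof
  assume "x \<in> SIP A"
  then obtain F G where FG: "F \<subseteq> A" "G \<subseteq> A" "finite F" "finite G" "x = \<Sum>F - \<Sum>G"
    unfolding SIP_def IP_def by blast
  have "\<Sum>F = \<Sum>(F - G) + \<Sum>(F \<inter> G)"
    using FG by (metis Diff_Diff_Int Diff_subset add.commute inf_le1 sum.subset_diff)
  moreover have "\<Sum>G = \<Sum>(G - F) + \<Sum>(F \<inter> G)"
    using FG by (metis Diff_Diff_Int Diff_subset add.commute inf_le2 inf_commute sum.subset_diff)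
  ultimately
  have "x = \<Sum>(F - G) - \<Sum>(G - F)" using FG by simp
  then show "\<exists>F G. F \<subseteq> A \<and> G \<subseteq> A \<and> finite F \<and> finite G \<and> F \<inter> G = {} \<and> x = \<Sum>F - \<Sum>G"
    using FG by (intro exI[of _ "F - G"] exI[of _ "G - F"]) auto
qed (unfold SIP_def IP_def, blast)

lemma SIP_mono: "A \<subseteq> A' \<Longrightarrow> SIP A \<subseteq> SIP A'"
  unfolding SIP_def IP_def by blast

lemma SIP_uminus: "x \<in> SIP A \<Longrightarrow> - x \<in> SIP A"
  unfolding SIP_def by force

lemma SIP_zero: "0 \<in> SIP A"
  unfolding SIP_def IP_def by force

lemma SIP_single: "a \<in> A \<Longrightarrow> a \<in> SIP A"
  unfolding SIP_iff_disjoint by (intro exI[of _ "{a}"] exI[of _ "{}"]) auto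

lemma SIP_add:
  assumes "x \<in> SIP A1" "y \<in> SIP A2" "A1 \<inter> A2 = {}"
  shows "x + y \<in> SIP (A1 \<union> A2)"
proof -
  obtain F1 G1 where 1: "F1 \<subseteq> A1" "G1 \<subseteq> A1" "finite F1" "finite G1" "x = \<Sum>F1 - \<Sum>G1"
    using assms(1) unfolding SIP_def IP_def by blast
  obtain F2 G2 where 2: "F2 \<subseteq> A2" "G2 \<subseteq> A2" "finite F2" "finite G2" "y = \<Sum>F2 - \<Sum>G2"
    using assms(2) unfolding SIP_def IP_def by blast
  have "F1 \<inter> F2 = {}" "G1 \<inter> G2 = {}" using 1 2 assms(3) by auto
  then have "x + y = \<Sum>(F1 \<union> F2) - \<Sum>(G1 \<union> G2)"
    using 1 2 by (simp add: sum.union_disjoint)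
  then show ?thesis unfolding SIP_def IP_def using 1 2 by blast
qed

lemma SIP_sum:
  assumes "finite P" "\<And>j. j \<in> P \<Longrightarrow> f j \<in> SIP (E j)" "disjoint_family_on E P"
  shows "(\<Sum>j\<in>P. f j) \<in> SIP (\<Union>j\<in>P. E j)"
  using assms
proof (induction P rule: finite_induct)
  case (insert a P)
  have "f a + (\<Sum>j\<in>P. f j) \<in> SIP (E a \<union> (\<Union>j\<in>P. E j))"
    using insert by (intro SIP_add) (auto simp: disjoint_family_on_def)
  then show ?case using insert by simp
qed (simp add: SIP_zero)

lemma SIP_diff_sums:
  assumes "finite P" "finite Q" "P \<inter> Q = {}"
    and "\<And>j. j \<in> P \<union> Q \<Longrightarrow> f j \<in> SIP (E j)" and "disjoint_family_on E (P \<union> Q)"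
  shows "(\<Sum>j\<in>P. f j) - (\<Sum>j\<in>Q. f j) \<in> SIP (\<Union>j\<in>P \<union> Q. E j)"
proof -
  have "(\<Sum>j\<in>P. f j) \<in> SIP (\<Union>j\<in>P. E j)"
    using assms(1) by (rule SIP_sum) (use assms(4) disjoint_family_on_mono[OF _ assms(5)] in auto)
  moreover have "(\<Sum>j\<in>Q. f j) \<in> SIP (\<Union>j\<in>Q. E j)"
    using assms(2) by (rule SIP_sum) (use assms(4) disjoint_family_on_mono[OF _ assms(5)] in auto)
  moreover have "(\<Union>j\<in>P. E j) \<inter> (\<Union>j\<in>Q. E j) = {}"
  proof -
    have "E j \<inter> E k = {}" if "j \<in> P" "k \<in> Q" for j k
    proof -
      have "j \<noteq> k" using assms(3) that by blast
      then show ?thesis using assms(5) that by (simp add: disjoint_family_on_def)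
    qed
    then show ?thesis by blast
  qed
  ultimately have "(\<Sum>j\<in>P. f j) + - (\<Sum>j\<in>Q. f j) \<in> SIP ((\<Union>j\<in>P. E j) \<union> (\<Union>j\<in>Q. E j))"
    by (intro SIP_add SIP_uminus)
  then show ?thesis by (simp add: UN_Un)
qed

lemma SIP_bounded:
  fixes A :: "int set"
  assumes "x \<in> SIP A"
  obtains M where "x \<in> SIP (A \<inter> {..M})"
proof -
  obtain F G where FG: "F \<subseteq> A" "G \<subseteq> A" "finite F" "finite G" "x = \<Sum>F - \<Sum>G"
    using assms unfolding SIP_def IP_def by blast
  define M where "M = Max (insert 0 (F \<union> G))"
  have "F \<subseteq> A \<inter> {..M}" "G \<subseteq> A \<inter> {..M}" using FG by (auto simp: M_def)
  then show ?thesis using FG that unfolding SIP_def IP_def by blast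
qed

lemma SIP_range_inj:
  fixes f :: "'a \<Rightarrow> int"
  assumes "inj f" "x \<in> SIP (range f)"
  obtains P Q where "finite P" "finite Q" "P \<inter> Q = {}" "x = (\<Sum>j\<in>P. f j) - (\<Sum>j\<in>Q. f j)"
proof -
  obtain F G where FG: "F \<subseteq> range f" "G \<subseteq> range f" "finite F" "finite G" "F \<inter> G = {}"
    "x = \<Sum>F - \<Sum>G"
    using assms(2) unfolding SIP_iff_disjoint by blast
  have img: "F = f ` (f -` F)" "G = f ` (f -` G)" using FG(1,2) by auto
  have inj: "inj_on f (f -` F)" "inj_on f (f -` G)" using assms(1) inj_on_subset by auto
  have "finite (f -` F)" "finite (f -` G)" using FG(3,4) assms(1) by (simp_all add: finite_vimageI)
  moreover have "f -` F \<inter> f -` G = {}" using FG(5) by auto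
  moreover have "x = (\<Sum>j\<in>f -` F. f j) - (\<Sum>j\<in>f -` G. f j)"
    using FG(6) img inj by (metis sum.reindex_cong)
  ultimately show ?thesis by (rule that)
qed

lemma SIP_setI: "infinite A \<Longrightarrow> A \<subseteq> {1..} \<Longrightarrow> SIP_set {n. n \<ge> 1 \<and> int n \<in> SIP (int ` A)}"
  unfolding SIP_set_def by blast

lemma SIP_set_positive: "SIP_set B \<Longrightarrow> \<exists>n\<in>B. n \<ge> 1"
proof -
  assume "SIP_set B"
  then obtain A where A: "infinite A" "A \<subseteq> {1..}" "{n. n \<ge> 1 \<and> int n \<in> SIP (int ` A)} \<subseteq> B"
    unfolding SIP_set_def by blast
  obtain a where "a \<in> A" using A(1) by (metis ex_in_conv finite.emptyI)
  then show ?thesis using A(2,3) by (auto intro!: SIP_single)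
qed

definition lacunary :: "int set \<Rightarrow> bool" where
  "lacunary C \<longleftrightarrow> (\<forall>c\<in>C. c \<ge> 1) \<and> (\<forall>t\<in>C. 2 * \<Sum>{c\<in>C. c < t} < t)"

lemma lacunary_pos: "lacunary C \<Longrightarrow> c \<in> C \<Longrightarrow> 1 \<le> c"
  by (simp add: lacunary_def)

lemma lacunary_finite_le: "lacunary C \<Longrightarrow> finite {c\<in>C. c \<le> t}"
  by (rule finite_subset[of _ "{1..t}"]) (auto simp: lacunary_def)

lemma lacunary_sum_le:
  "lacunary C \<Longrightarrow> X \<subseteq> {c\<in>C. c \<le> t} \<Longrightarrow> \<Sum>X \<le> \<Sum>{c\<in>C. c \<le> t}"
  by (rule sum_mono2[OF lacunary_finite_le]) (auto simp: lacunary_def)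

lemma lacunary_sum_nonneg: "lacunary C \<Longrightarrow> X \<subseteq> C \<Longrightarrow> 0 \<le> \<Sum>X"
  unfolding lacunary_def by (smt (verit) subsetD sum_nonneg)

text \<open>The sign of a difference of disjoint sums from a lacunary set is that of its largest term.\<close>
lemma lacunary_SIP_tail_gt:
  assumes C: "lacunary C" and y: "y \<in> SIP (C \<inter> {M<..})" "y > 0"
  shows "\<Sum>{c\<in>C. c \<le> M} < y"
proof -
  obtain F G where FG: "F \<subseteq> C \<inter> {M<..}" "G \<subseteq> C \<inter> {M<..}" "finite F" "finite G"
    "F \<inter> G = {}" "y = \<Sum>F - \<Sum>G"
    using y(1) unfolding SIP_iff_disjoint by blast
  define t where "t = Max (F \<union> G)"
  have "F \<union> G \<noteq> {}"
  proof
    assume "F \<union> G = {}"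
    then show False using FG(6) y(2) by simp
  qed
  then have t: "t \<in> F \<union> G" using FG(3,4) Max_in[of "F \<union> G"] unfolding t_def by blast
  have "t \<in> C" using t FG by blast
  define L where "L = {c\<in>C. c \<le> t - 1}"
  have "L = {c\<in>C. c < t}" by (auto simp: L_def)
  then have gap: "2 * \<Sum>L < t" using C \<open>t \<in> C\<close> by (simp add: lacunary_def)
  have "L \<subseteq> C" by (auto simp: L_def)
  have t_max: "s \<le> t" if "s \<in> F \<union> G" for s
    using FG(3,4) that unfolding t_def by (simp add: Max_ge)
  have below: "\<Sum>H \<le> \<Sum>L" if "H \<subseteq> F \<union> G" "t \<notin> H" for H
    unfolding L_def
  proof (rule lacunary_sum_le[OF C])
    show "H \<subseteq> {c \<in> C. c \<le> t - 1}"
    proof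
      fix s assume "s \<in> H"
      then have "s \<in> C" "s \<le> t" "s \<noteq> t" using that FG t_max by auto
      then show "s \<in> {c \<in> C. c \<le> t - 1}" by simp
    qed
  qed
  have above: "t \<le> \<Sum>H" if "t \<in> H" "H \<subseteq> F \<union> G" for H
  proof -
    have "finite H" using that(2) FG(3,4) by (meson finite_UnI finite_subset)
    moreover have "0 \<le> x" if "x \<in> H" for x
    proof -
      have "x \<in> C" using that \<open>H \<subseteq> F \<union> G\<close> FG by blast
      then show ?thesis using lacunary_pos[OF C] by fastforce
    qed
    ultimately show ?thesis using member_le_sum[of t H id] that(1) by simp
  qed
  have "t \<in> F"
  proof (rule ccontr)
    assume "t \<notin> F"
    then have "t \<le> \<Sum>G" "\<Sum>F \<le> \<Sum>L" using t above[of G] below[of F] by auto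
    then show False using FG(6) y(2) gap lacunary_sum_nonneg[OF C \<open>L \<subseteq> C\<close>] by linarith
  qed
  then have "t \<le> \<Sum>F" "\<Sum>G \<le> \<Sum>L" using above[of F] below[of G] FG(5) by auto
  moreover have "\<Sum>{c\<in>C. c \<le> M} \<le> \<Sum>L"
  proof -
    have "M < t" using t FG by auto
    then show ?thesis unfolding L_def by (intro lacunary_sum_le[OF C]) auto
  qed
  ultimately show ?thesis using FG(6) gap lacunary_sum_nonneg[OF C \<open>L \<subseteq> C\<close>] by linarith
qed

lemma lacunary_SIP_less:
  assumes C: "lacunary C" and x: "x \<in> SIP (C \<inter> {..M})"
    and y: "y \<in> SIP (C \<inter> {M<..})" "y > 0"
  shows "x < y"
proof -
  obtain F G where FG: "F \<subseteq> C \<inter> {..M}" "G \<subseteq> C \<inter> {..M}" "x = \<Sum>F - \<Sum>G"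
    using x unfolding SIP_def IP_def by blast
  have "\<Sum>F \<le> \<Sum>{c\<in>C. c \<le> M}" "0 \<le> \<Sum>G"
    using FG lacunary_sum_le[OF C, of F M] lacunary_sum_nonneg[OF C, of G] by auto
  then show ?thesis using FG(3) lacunary_SIP_tail_gt[OF C y] by linarith
qed

lemma infinite_lacunary_subset:
  fixes A :: "nat set"
  assumes "infinite A"
  obtains C where "C \<subseteq> A" "infinite C" "lacunary (int ` C)"
proof -
  define c where "c = rec_nat (enumerate A 1) (\<lambda>_ x. enumerate A (3 * x))"
  have c0: "c 0 = enumerate A 1" and cS: "c (Suc j) = enumerate A (3 * c j)" for j
    by (simp_all add: c_def)
  have cA: "c j \<in> A" for j
    by (cases j) (simp_all add: c0 cS enumerate_in_set assms)
  have c_Suc_ge: "3 * c j \<le> c (Suc j)" for j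
    using le_enumerate[OF assms] by (simp add: cS)
  have c_pos: "1 \<le> c j" for j
  proof (induction j)
    case 0 then show ?case using le_enumerate[OF assms, of 1] by (simp add: c0)
  next
    case (Suc j) then show ?case using c_Suc_ge[of j] by linarith
  qed
  have mono: "strict_mono c"
  proof (rule strict_monoI_Suc)
    show "c j < c (Suc j)" for j using c_Suc_ge[of j] c_pos[of j] by linarith
  qed
  have gap: "2 * (\<Sum>i<j. c i) < c j" for j
  proof (induction j)
    case 0 then show ?case using c_pos[of 0] by simp
  next
    case (Suc j) then show ?case using c_Suc_ge[of j] by simp
  qed
  have "lacunary (int ` range c)"
    unfolding lacunary_def
  proof (intro conjI ballI)
    fix t assume "t \<in> int ` range c"
    then obtain j where t: "t = int (c j)" by auto
    have "{x \<in> int ` range c. x < t} = (int \<circ> c) ` {..<j}"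
      using mono by (auto simp: t strict_mono_less)
    moreover have "inj_on (int \<circ> c) {..<j}"
      using strict_mono_imp_inj_on[OF mono] by (auto simp: inj_on_def)
    ultimately have "\<Sum>{x \<in> int ` range c. x < t} = (\<Sum>i<j. int (c i))"
      using sum.reindex[of "int \<circ> c" "{..<j}" id] by simp
    then show "2 * \<Sum>{x \<in> int ` range c. x < t} < t"
      using gap[of j] t by (simp flip: of_nat_sum)
  qed (use c_pos in auto)
  moreover have "infinite (range c)"
    using strict_mono_imp_inj_on[OF mono] range_inj_infinite by blast
  ultimately show ?thesis using that cA by blast
qed

lemma SIP_set_lacunary_tail:
  assumes "C \<subseteq> {1..}" "infinite C"
  shows "SIP_set {n. n \<ge> 1 \<and> int n \<in> SIP (int ` C \<inter> {M<..})}"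
proof -
  have "finite {x::nat. int x \<le> M}"
    by (rule finite_subset[of _ "{..nat M}"]) auto
  moreover have "{x \<in> C. M < int x} = C - {x. int x \<le> M}" by auto
  ultimately have "infinite {x \<in> C. M < int x}"
    using Diff_infinite_finite[OF _ assms(2)] by simp
  moreover have "int ` {x \<in> C. M < int x} = int ` C \<inter> {M<..}" by auto
  ultimately show ?thesis using SIP_setI[of "{x \<in> C. M < int x}"] assms(1) by auto
qed

lemma SIP_set_lacunary_generator:
  assumes "SIP_set B"
  obtains C where "lacunary C" "\<And>M. SIP_set {n. n \<ge> 1 \<and> int n \<in> SIP (C \<inter> {M<..})}"
    "{n. n \<ge> 1 \<and> int n \<in> SIP C} \<subseteq> B"
proof -
  obtain A where A: "infinite A" "A \<subseteq> {1..}" "{n. n \<ge> 1 \<and> int n \<in> SIP (int ` A)} \<subseteq> B"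
    using assms unfolding SIP_set_def by blast
  obtain A' where A': "A' \<subseteq> A" "infinite A'" "lacunary (int ` A')"
    by (rule infinite_lacunary_subset[OF A(1)])
  have tails: "SIP_set {n. n \<ge> 1 \<and> int n \<in> SIP (int ` A' \<inter> {M<..})}" for M
    using A(2) A'(1,2) by (intro SIP_set_lacunary_tail) auto
  have "SIP (int ` A') \<subseteq> SIP (int ` A)" using A'(1) by (intro SIP_mono image_mono)
  then have "{n. n \<ge> 1 \<and> int n \<in> SIP (int ` A')} \<subseteq> B" using A(3) by blast
  with A'(3) tails show ?thesis by (rule that)
qed

lemma SIP_set_strict_mono:
  fixes b :: "nat \<Rightarrow> nat"
  assumes "strict_mono b" "\<And>k. 1 \<le> b k"
  shows "SIP_set {n. n \<ge> 1 \<and> int n \<in> SIP (range (\<lambda>j. int (b j)))}"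
proof -
  have "infinite (range b)" using assms(1) strict_mono_imp_inj_on range_inj_infinite by blast
  moreover have "range b \<subseteq> {1..}" using assms(2) by auto
  moreover have "int ` range b = range (\<lambda>j. int (b j))" by (simp add: image_image)
  ultimately show ?thesis using SIP_setI[of "range b"] by simp
qed

lemma lacunary_SIP_blocks_strict_mono:
  assumes C: "lacunary C" and pos: "\<And>k. 1 \<le> b k"
    and b: "\<And>k. int (b k) \<in> SIP (C \<inter> {M k<..M (Suc k)})"
  shows "strict_mono b"
proof (rule strict_monoI_Suc)
  fix k
  have "C \<inter> {M k<..M (Suc k)} \<subseteq> C \<inter> {..M (Suc k)}" by auto
  then have "int (b k) \<in> SIP (C \<inter> {..M (Suc k)})" using b[of k] SIP_mono by blast
  moreover have "C \<inter> {M (Suc k)<..M (Suc (Suc k))} \<subseteq> C \<inter> {M (Suc k)<..}" by auto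
  then have "int (b (Suc k)) \<in> SIP (C \<inter> {M (Suc k)<..})" using b[of "Suc k"] SIP_mono by blast
  ultimately show "b k < b (Suc k)" using lacunary_SIP_less[OF C] pos[of "Suc k"] by fastforce
qed

lemma SIP_diff_sums_blocks:
  fixes M :: "nat \<Rightarrow> int" and b :: "nat \<Rightarrow> nat"
  assumes "mono M" and b: "\<And>j. int (b j) \<in> SIP (C \<inter> {M j<..M (Suc j)})"
    and PQ: "finite P" "finite Q" "P \<inter> Q = {}"
  shows "(\<Sum>j\<in>P. int (b j)) - (\<Sum>j\<in>Q. int (b j)) \<in> SIP (C \<inter> {M 0<..})"
proof -
  define E where "E j = C \<inter> {M j<..M (Suc j)}" for j
  have disj: "E i \<inter> E j = {}" if "i < j" for i j
  proof -
    have "M (Suc i) \<le> M j" using monoD[OF assms(1), of "Suc i" j] that by simp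
    then show ?thesis by (auto simp: E_def)
  qed
  have "disjoint_family_on E (P \<union> Q)"
    unfolding disjoint_family_on_def using disj by (metis inf_commute nat_neq_iff)
  then have "(\<Sum>j\<in>P. int (b j)) - (\<Sum>j\<in>Q. int (b j)) \<in> SIP (\<Union>j\<in>P \<union> Q. E j)"
    using b unfolding E_def by (intro SIP_diff_sums[OF PQ])
  moreover have "E j \<subseteq> C \<inter> {M 0<..}" for j
    using monoD[OF assms(1), of 0 j] by (auto simp: E_def)
  then have "(\<Union>j\<in>P \<union> Q. E j) \<subseteq> C \<inter> {M 0<..}" by blast
  ultimately show ?thesis using SIP_mono by blast
qed

lemma continuous_map_funpow:
  "continuous_map Y Y S \<Longrightarrow> continuous_map Y Y (S ^^ n)"
  by (induction n) (auto simp: continuous_map_compose)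

lemma homeomorphic_map_funpow:
  "homeomorphic_map Y Y S \<Longrightarrow> homeomorphic_map Y Y (S ^^ n)"
proof (induction n)
  case 0 then show ?case using homeomorphic_map_id[of Y Y] by (simp add: id_def)
next
  case (Suc n)
  then have "homeomorphic_map Y Y (S \<circ> S ^^ n)"
    using homeomorphic_map_compose[of Y Y "S ^^ n" Y S] by blast
  then show ?case by (simp add: comp_def)
qed

lemma openin_return_set:
  assumes "continuous_map Y Y S" "openin Y U" "openin Y V"
  shows "openin Y (U \<inter> {x \<in> topspace Y. (S ^^ n) x \<in> V})"
  by (intro openin_Int assms(2) openin_continuous_map_preimage[OF continuous_map_funpow] assms(1,3))

lemma return_set_nonempty:
  "U \<subseteq> topspace Y \<Longrightarrow> n \<in> return_times S U V \<Longrightarrow> U \<inter> {x \<in> topspace Y. (S ^^ n) x \<in> V} \<noteq> {}"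
  unfolding return_times_def by blast

lemma mild_mixing_return_time:
  assumes "mild_mixing Y S" "openin Y U" "openin Y V" "U \<noteq> {}" "V \<noteq> {}" "SIP_set B"
  shows "\<exists>n\<in>B. n \<in> return_times S U V"
  using assms unfolding mild_mixing_def by blast

lemma mild_mixing_SIP_block_return:
  assumes mm: "mild_mixing Y S" and V: "openin Y V" "V \<noteq> {}"
    and tails: "\<And>M. SIP_set {n. n \<ge> 1 \<and> int n \<in> SIP (C \<inter> {M<..})}"
  obtains b M' where "1 \<le> b" "int b \<in> SIP (C \<inter> {M<..M'})" "M \<le> M'" "b \<in> return_times S V V"
proof -
  obtain b where b: "b \<in> return_times S V V" "1 \<le> b" "int b \<in> SIP (C \<inter> {M<..})"
    using mild_mixing_return_time[OF mm V(1) V(1) V(2) V(2) tails] by blast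
  obtain M' where "int b \<in> SIP (C \<inter> {M<..} \<inter> {..M'})"
    using SIP_bounded[OF b(3)] by blast
  moreover have "C \<inter> {M<..} \<inter> {..M'} \<subseteq> C \<inter> {M<..max M M'}" by auto
  ultimately have "int b \<in> SIP (C \<inter> {M<..max M M'})" using SIP_mono by blast
  then show ?thesis using that b(1,2) by simp
qed

lemma funpow_sum_in_nested_sets:
  assumes nested: "\<And>k. W (Suc k) \<subseteq> W k \<inter> (S ^^ b k) -` W k"
  shows "x \<in> W K \<Longrightarrow> P \<subseteq> {..<K} \<Longrightarrow> (S ^^ (\<Sum>j\<in>P. b j)) x \<in> W 0"
proof (induction K arbitrary: x P)
  case (Suc K)
  have x: "x \<in> W K" "(S ^^ b K) x \<in> W K" using Suc.prems(1) nested[of K] by auto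
  show ?case
  proof (cases "K \<in> P")
    case True
    have "finite P" using Suc.prems(2) finite_subset by blast
    then have "(\<Sum>j\<in>P. b j) = (\<Sum>j\<in>P - {K}. b j) + b K" using True by (simp add: sum.remove)
    then have "(S ^^ (\<Sum>j\<in>P. b j)) x = (S ^^ (\<Sum>j\<in>P - {K}. b j)) ((S ^^ b K) x)"
      by (simp add: funpow_add)
    moreover have "P - {K} \<subseteq> {..<K}" using Suc.prems(2) by auto
    ultimately show ?thesis using Suc.IH x(2) by auto
  next
    case False
    then have "P \<subseteq> {..<K}" using Suc.prems(2) by (auto simp: less_Suc_eq)
    then show ?thesis using Suc.IH x(1) by blast
  qed
qed simp

lemma nested_sets_diff_sums_return:
  assumes nested: "\<And>k. W (Suc k) \<subseteq> W k \<inter> (S ^^ b k) -` W k" and ne: "\<And>k. W k \<noteq> {}"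
    and PQ: "finite P" "finite Q" "(\<Sum>j\<in>P. b j) = n + (\<Sum>j\<in>Q. b j)"
  shows "\<exists>y\<in>W 0. (S ^^ n) y \<in> W 0"
proof -
  obtain K where K: "P \<union> Q \<subseteq> {..<K}" using PQ(1,2) finite_nat_iff_bounded by blast
  obtain x where x: "x \<in> W K" using ne[of K] by blast
  have "(S ^^ (\<Sum>j\<in>Q. b j)) x \<in> W 0" "(S ^^ (\<Sum>j\<in>P. b j)) x \<in> W 0"
    using funpow_sum_in_nested_sets[OF nested x] K by auto
  moreover have "(S ^^ (\<Sum>j\<in>P. b j)) x = (S ^^ n) ((S ^^ (\<Sum>j\<in>Q. b j)) x)"
    using PQ(3) by (simp add: funpow_add)
  ultimately show ?thesis by auto
qed

lemma mild_mixing_nested_return_sets: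
  fixes C :: "int set" and M\<^sub>0 :: int
  assumes cont: "continuous_map Y Y S" and mm: "mild_mixing Y S"
    and W: "openin Y W" "W \<noteq> {}"
    and tails: "\<And>M. SIP_set {n. n \<ge> 1 \<and> int n \<in> SIP (C \<inter> {M<..})}"
  obtains V :: "nat \<Rightarrow> 'a set" and M :: "nat \<Rightarrow> int" and b :: "nat \<Rightarrow> nat"
  where "V 0 = W" "\<And>k. V k \<noteq> {}" "\<And>k. V (Suc k) \<subseteq> V k \<inter> (S ^^ b k) -` V k"
    "M 0 = M\<^sub>0" "mono M" "\<And>k. 1 \<le> b k" "\<And>k. int (b k) \<in> SIP (C \<inter> {M k<..M (Suc k)})"
proof -
  \<comment> \<open>States are triples (W_k, M_k, b_(k-1)); b_k is read off the state at k + 1.\<close>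
  define admissible where "admissible k x \<longleftrightarrow>
    openin Y (fst x) \<and> fst x \<noteq> {} \<and> (k = 0 \<longrightarrow> x = (W, M\<^sub>0, 0))"
    for k :: nat and x :: "'a set \<times> int \<times> nat"
  define extends where "extends x y \<longleftrightarrow>
    1 \<le> snd (snd y) \<and> int (snd (snd y)) \<in> SIP (C \<inter> {fst (snd x)<..fst (snd y)}) \<and>
    fst (snd x) \<le> fst (snd y) \<and> fst y = fst x \<inter> {z \<in> topspace Y. (S ^^ snd (snd y)) z \<in> fst x}"
    for x y :: "'a set \<times> int \<times> nat"
  have "\<exists>f. \<forall>k. admissible k (f k) \<and> extends (f k) (f (Suc k))"
  proof (rule dependent_nat_choice)
    show "\<exists>x. admissible 0 x" using W by (auto simp: admissible_def)
  next
    fix x k assume "admissible k x"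
    then have V: "openin Y (fst x)" "fst x \<noteq> {}" by (auto simp: admissible_def)
    obtain c M' where c: "1 \<le> c" "int c \<in> SIP (C \<inter> {fst (snd x)<..M'})" "fst (snd x) \<le> M'"
      "c \<in> return_times S (fst x) (fst x)"
      by (rule mild_mixing_SIP_block_return[OF mm V tails])
    define V' where "V' = fst x \<inter> {z \<in> topspace Y. (S ^^ c) z \<in> fst x}"
    have "openin Y V'" "V' \<noteq> {}"
      unfolding V'_def using openin_return_set[OF cont V(1) V(1)]
        return_set_nonempty[OF openin_subset[OF V(1)] c(4)] by auto
    then show "\<exists>y. admissible (Suc k) y \<and> extends x y"
      using c by (intro exI[of _ "(V', M', c)"]) (simp add: admissible_def extends_def V'_def)
  qed
  then obtain f where f: "\<And>k. admissible k (f k)" "\<And>k. extends (f k) (f (Suc k))" by blast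
  define V where "V k = fst (f k)" for k
  define M where "M k = fst (snd (f k))" for k
  define b where "b k = snd (snd (f (Suc k)))" for k
  have V0: "V 0 = W" and M0: "M 0 = M\<^sub>0" and ne: "V k \<noteq> {}" for k
    using f(1)[of 0] f(1)[of k] by (simp_all add: admissible_def V_def M_def)
  have b: "1 \<le> b k" "int (b k) \<in> SIP (C \<inter> {M k<..M (Suc k)})" "M k \<le> M (Suc k)"
    "V (Suc k) \<subseteq> V k \<inter> (S ^^ b k) -` V k" for k
    using f(2)[of k] by (auto simp: extends_def V_def M_def b_def)
  have "mono M" using b(3) by (simp add: mono_iff_le_Suc)
  from V0 ne b(4) M0 this b(1,2) show ?thesis by (rule that)
qed

text \<open>In the induction over the coordinates of a product, R m is the set of simultaneous
  return times of the remaining coordinates i from T_i^m(U_i) to V_i.\<close>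
lemma mild_mixing_return_times_inter:
  fixes R :: "nat \<Rightarrow> nat set"
  assumes cont: "continuous_map Y Y S" and mm: "mild_mixing Y S"
    and U: "openin Y U" "U \<noteq> {}" and V: "openin Y V" "V \<noteq> {}"
    and R: "\<And>m B. SIP_set B \<Longrightarrow> R m \<inter> B \<noteq> {}"
    and R_shift: "\<And>m k. k \<in> R m \<Longrightarrow> 1 \<le> k \<Longrightarrow> m + k \<in> R 0"
    and B: "SIP_set B"
  shows "\<exists>n\<in>B. n \<in> R 0 \<and> n \<in> return_times S U V"
proof -
  obtain C where C: "lacunary C" "\<And>M. SIP_set {n. n \<ge> 1 \<and> int n \<in> SIP (C \<inter> {M<..})}"
    "{n. n \<ge> 1 \<and> int n \<in> SIP C} \<subseteq> B"
    using SIP_set_lacunary_generator[OF B] by blast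
  obtain n0 where n0: "n0 \<in> return_times S U V" "int n0 \<in> SIP (C \<inter> {0<..})"
    using mild_mixing_return_time[OF mm U(1) V(1) U(2) V(2) C(2)] by blast
  obtain M0 where "int n0 \<in> SIP (C \<inter> {0<..} \<inter> {..M0})"
    using SIP_bounded[OF n0(2)] by blast
  then have M0: "int n0 \<in> SIP (C \<inter> {..M0})"
    using SIP_mono[of "C \<inter> {0<..} \<inter> {..M0}" "C \<inter> {..M0}"] by blast
  define W where "W = U \<inter> {x \<in> topspace Y. (S ^^ n0) x \<in> V}"
  have W: "openin Y W" "W \<noteq> {}"
    unfolding W_def using openin_return_set[OF cont U(1) V(1)]
      return_set_nonempty[OF openin_subset[OF U(1)] n0(1)] by auto
  obtain Ws M b where b: "Ws 0 = W" "\<And>k. Ws k \<noteq> {}" "\<And>k. Ws (Suc k) \<subseteq> Ws k \<inter> (S ^^ b k) -` Ws k"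
      "M 0 = M0" "mono M" "\<And>k. 1 \<le> b k" "\<And>k. int (b k) \<in> SIP (C \<inter> {M k<..M (Suc k)})"
    using mild_mixing_nested_return_sets[OF cont mm W C(2), where M\<^sub>0 = M0] by metis
  have "strict_mono b" using C(1) b(6,7) by (rule lacunary_SIP_blocks_strict_mono)
  then have "R n0 \<inter> {n. n \<ge> 1 \<and> int n \<in> SIP (range (\<lambda>j. int (b j)))} \<noteq> {}"
    by (intro R SIP_set_strict_mono[OF \<open>strict_mono b\<close> b(6)])
  then obtain k where k: "k \<in> R n0" "1 \<le> k" "int k \<in> SIP (range (\<lambda>j. int (b j)))"
    by blast
  have "inj (\<lambda>j. int (b j))" using \<open>strict_mono b\<close> by (simp add: inj_on_def strict_mono_eq)
  then obtain P Q where PQ: "finite P" "finite Q" "P \<inter> Q = {}"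
    "int k = (\<Sum>j\<in>P. int (b j)) - (\<Sum>j\<in>Q. int (b j))"
    using k(3) by (rule SIP_range_inj)
  have "(\<Sum>j\<in>P. b j) = k + (\<Sum>j\<in>Q. b j)" using PQ(4) by (simp flip: of_nat_sum)
  then have "\<exists>y\<in>Ws 0. (S ^^ k) y \<in> Ws 0"
    by (rule nested_sets_diff_sums_return[where W = Ws and S = S and b = b, OF b(3,2) PQ(1,2)])
  then obtain y where "y \<in> W" "(S ^^ k) y \<in> W" using b(1) by auto
  then have "(S ^^ (n0 + k)) y \<in> V" "y \<in> U" by (simp_all add: W_def funpow_add)
  then have ret: "n0 + k \<in> return_times S U V" using k(2) unfolding return_times_def by auto
  have "int k \<in> SIP (C \<inter> {M0<..})"
    using SIP_diff_sums_blocks[OF b(5,7) PQ(1-3)] PQ(4) b(4) by simp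
  then have "int n0 + int k \<in> SIP (C \<inter> {..M0} \<union> C \<inter> {M0<..})"
    by (intro SIP_add[OF M0]) auto
  moreover have "C \<inter> {..M0} \<union> C \<inter> {M0<..} = C" by auto
  ultimately have "int (n0 + k) \<in> SIP C" by simp
  then have "n0 + k \<in> B" using C(3) k(2) by (simp add: subset_iff)
  moreover have "n0 + k \<in> R 0" using R_shift k(1,2) .
  ultimately show ?thesis using ret by blast
qed

lemma simultaneous_return_time_in_SIP_set:
  assumes "finite J" and hom: "\<And>i. i \<in> J \<Longrightarrow> homeomorphic_map (X i) (X i) (T i)"
    and mm: "\<And>i. i \<in> J \<Longrightarrow> mild_mixing (X i) (T i)"
    and UV: "\<And>i. i \<in> J \<Longrightarrow> openin (X i) (U i) \<and> openin (X i) (V i) \<and> U i \<noteq> {} \<and> V i \<noteq> {}"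
    and "SIP_set B"
  shows "\<exists>n\<in>B. 1 \<le> n \<and> (\<forall>i\<in>J. n \<in> return_times (T i) (U i) (V i))"
  using assms
proof (induction J arbitrary: U B rule: finite_induct)
  case empty
  then show ?case using SIP_set_positive by auto
next
  case (insert j J)
  define R where "R m = {k. \<forall>i\<in>J. k \<in> return_times (T i) ((T i ^^ m) ` U i) (V i)}" for m
  have "\<exists>n\<in>B. n \<in> R 0 \<and> n \<in> return_times (T j) (U j) (V j)"
  proof (rule mild_mixing_return_times_inter)
    show "continuous_map (X j) (X j) (T j)"
      using insert.prems(1) by (simp add: homeomorphic_imp_continuous_map)
    show "mild_mixing (X j) (T j)" using insert.prems(2) by simp
    show "openin (X j) (U j)" "U j \<noteq> {}" "openin (X j) (V j)" "V j \<noteq> {}"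
      using insert.prems(3) by auto
    show "SIP_set B" by fact
    show "R m \<inter> B' \<noteq> {}" if "SIP_set B'" for m B'
    proof -
      have "openin (X i) ((T i ^^ m) ` U i)" if "i \<in> J" for i
        using homeomorphic_imp_open_map[OF homeomorphic_map_funpow[OF insert.prems(1)]]
          insert.prems(3) that unfolding open_map_def by auto
      then have "\<exists>n\<in>B'. 1 \<le> n \<and> (\<forall>i\<in>J. n \<in> return_times (T i) ((T i ^^ m) ` U i) (V i))"
        using insert.prems(1-3) by (intro insert.IH \<open>SIP_set B'\<close>) auto
      then show ?thesis unfolding R_def by auto
    qed
    show "m + k \<in> R 0" if "k \<in> R m" "1 \<le> k" for m k
    proof -
      have "(T i ^^ (m + k)) ` U i = (T i ^^ k) ` ((T i ^^ m) ` U i)" for i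
        by (simp add: add.commute funpow_add image_comp)
      then show ?thesis using that unfolding R_def return_times_def by auto
    qed
  qed
  then obtain n where "n \<in> B" "n \<in> R 0" "n \<in> return_times (T j) (U j) (V j)" by blast
  then show ?case unfolding R_def return_times_def by (intro bexI[of _ n]) auto
qed

lemma prod_map_funpow:
  "z \<in> extensional I \<Longrightarrow> (prod_map I T ^^ n) z = (\<lambda>i\<in>I. (T i ^^ n) (z i))"
proof (induction n)
  case 0 then show ?case by (simp add: extensional_restrict)
next
  case (Suc n)
  have "(prod_map I T ^^ Suc n) z = prod_map I T ((prod_map I T ^^ n) z)" by simp
  also have "\<dots> = (\<lambda>i\<in>I. (T i ^^ Suc n) (z i))"
    unfolding Suc.IH[OF Suc.prems] by (auto simp: prod_map_def restrict_def)
  finally show ?case .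
qed

lemma continuous_map_prod_map:
  assumes "\<And>i. i \<in> I \<Longrightarrow> continuous_map (X i) (X i) (T i)"
  shows "continuous_map (product_topology X I) (product_topology X I) (prod_map I T)"
proof (rule continuous_map_coordinatewise_then_product)
  fix i assume i: "i \<in> I"
  have "(\<lambda>x. prod_map I T x i) = T i \<circ> (\<lambda>x. x i)"
    using i by (simp add: prod_map_def fun_eq_iff)
  then show "continuous_map (product_topology X I) (X i) (\<lambda>x. prod_map I T x i)"
    using continuous_map_compose[OF continuous_map_product_coordinates[OF i, of X] assms[OF i]] by simp
qed (simp add: prod_map_def)

lemma homeomorphic_map_prod_map:
  assumes hom: "\<And>i. i \<in> I \<Longrightarrow> homeomorphic_map (X i) (X i) (T i)"
  shows "homeomorphic_map (product_topology X I) (product_topology X I) (prod_map I T)"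
proof -
  have "\<forall>i\<in>I. \<exists>g. homeomorphic_maps (X i) (X i) (T i) g"
    using hom homeomorphic_map_maps by blast
  then obtain g where g: "\<forall>i\<in>I. homeomorphic_maps (X i) (X i) (T i) (g i)"
    by (rule bchoice[THEN exE])
  have inverse: "prod_map I f (prod_map I h x) = x"
    if x: "x \<in> topspace (product_topology X I)"
      and fh: "\<And>i. i \<in> I \<Longrightarrow> \<forall>y\<in>topspace (X i). f i (h i y) = y" for f h x
  proof
    fix i
    show "prod_map I f (prod_map I h x) i = x i"
    proof (cases "i \<in> I")
      case True
      then have "x i \<in> topspace (X i)" using x by (simp add: PiE_iff)
      then show ?thesis using fh[OF True] True by (simp add: prod_map_def)
    next
      case False
      then show ?thesis using x by (simp add: prod_map_def PiE_iff extensional_def)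
    qed
  qed
  have "homeomorphic_maps (product_topology X I) (product_topology X I) (prod_map I T) (prod_map I g)"
    unfolding homeomorphic_maps_def
  proof (intro conjI ballI)
    show "continuous_map (product_topology X I) (product_topology X I) (prod_map I T)"
      by (rule continuous_map_prod_map) (use g in \<open>auto simp: homeomorphic_maps_def\<close>)
    show "continuous_map (product_topology X I) (product_topology X I) (prod_map I g)"
      by (rule continuous_map_prod_map) (use g in \<open>auto simp: homeomorphic_maps_def\<close>)
  next
    fix x assume "x \<in> topspace (product_topology X I)"
    then show "prod_map I g (prod_map I T x) = x" "prod_map I T (prod_map I g x) = x"
      by (rule inverse, use g in \<open>auto simp: homeomorphic_maps_def\<close>)+
  qed
  then show ?thesis by (rule homeomorphic_maps_imp_map)
qed

lemma return_times_PiE: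
  assumes "1 \<le> n" and ret: "\<And>i. i \<in> I \<Longrightarrow> n \<in> return_times (T i) (U i) (V i)"
  shows "n \<in> return_times (prod_map I T) (\<Pi>\<^sub>E i\<in>I. U i) (\<Pi>\<^sub>E i\<in>I. V i)"
proof -
  have "\<forall>i\<in>I. \<exists>x. x \<in> U i \<and> (T i ^^ n) x \<in> V i"
    using ret unfolding return_times_def by blast
  then obtain z where z: "\<forall>i\<in>I. z i \<in> U i \<and> (T i ^^ n) (z i) \<in> V i"
    by (rule bchoice[THEN exE])
  have zU: "restrict z I \<in> (\<Pi>\<^sub>E i\<in>I. U i)" using z by simp
  have "(prod_map I T ^^ n) (restrict z I) = (\<lambda>i\<in>I. (T i ^^ n) (z i))"
    by (simp add: prod_map_funpow cong: restrict_cong)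
  also have "\<dots> \<in> (\<Pi>\<^sub>E i\<in>I. V i)" using z by simp
  finally have "(prod_map I T ^^ n) (restrict z I) \<in> (prod_map I T ^^ n) ` (\<Pi>\<^sub>E i\<in>I. U i) \<inter> (\<Pi>\<^sub>E i\<in>I. V i)"
    using zU by (intro IntI imageI)
  then show ?thesis using assms(1) unfolding return_times_def by blast
qed

lemma return_times_mono:
  assumes "U \<subseteq> U'" "V \<subseteq> V'"
  shows "return_times T U V \<subseteq> return_times T U' V'"
proof -
  have img: "(T ^^ n) ` U \<inter> V \<subseteq> (T ^^ n) ` U' \<inter> V'" for n
    using assms by (intro Int_mono image_mono)
  show ?thesis unfolding return_times_def by (intro Collect_mono) (metis img subset_empty)
qed

lemma mild_mixing_prod_map:
  assumes hom: "\<And>i. i \<in> I \<Longrightarrow> homeomorphic_map (X i) (X i) (T i)"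
    and mm: "\<And>i. i \<in> I \<Longrightarrow> mild_mixing (X i) (T i)"
  shows "mild_mixing (product_topology X I) (prod_map I T)"
  unfolding mild_mixing_def
proof (intro allI impI)
  fix U V B
  assume UV: "openin (product_topology X I) U \<and> openin (product_topology X I) V \<and> U \<noteq> {} \<and> V \<noteq> {}"
    and B: "SIP_set B"
  obtain x y where "x \<in> U" "y \<in> V" using UV by blast
  obtain U' where U': "x \<in> (\<Pi>\<^sub>E i\<in>I. U' i)" "\<And>i. openin (X i) (U' i)"
      "finite {i. U' i \<noteq> topspace (X i)}" "(\<Pi>\<^sub>E i\<in>I. U' i) \<subseteq> U"
    using product_topology_open_contains_basis[of X I U x] UV \<open>x \<in> U\<close> by blast
  obtain V' where V': "y \<in> (\<Pi>\<^sub>E i\<in>I. V' i)" "\<And>i. openin (X i) (V' i)"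
      "finite {i. V' i \<noteq> topspace (X i)}" "(\<Pi>\<^sub>E i\<in>I. V' i) \<subseteq> V"
    using product_topology_open_contains_basis[of X I V y] UV \<open>y \<in> V\<close> by blast
  define J where "J = {i \<in> I. U' i \<noteq> topspace (X i) \<or> V' i \<noteq> topspace (X i)}"
  have "J \<subseteq> {i. U' i \<noteq> topspace (X i)} \<union> {i. V' i \<noteq> topspace (X i)}" by (auto simp: J_def)
  then have "finite J" using U'(3) V'(3) by (rule finite_subset[OF _ finite_UnI])
  have ne: "U' i \<noteq> {}" "V' i \<noteq> {}" if "i \<in> I" for i
    using PiE_mem[OF U'(1) that] PiE_mem[OF V'(1) that] by auto
  have "\<exists>n\<in>B. 1 \<le> n \<and> (\<forall>i\<in>J. n \<in> return_times (T i) (U' i) (V' i))"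
  proof (rule simultaneous_return_time_in_SIP_set[OF \<open>finite J\<close>])
    show "homeomorphic_map (X i) (X i) (T i)" if "i \<in> J" for i
      using that hom by (simp add: J_def)
    show "mild_mixing (X i) (T i)" if "i \<in> J" for i
      using that mm by (simp add: J_def)
    show "openin (X i) (U' i) \<and> openin (X i) (V' i) \<and> U' i \<noteq> {} \<and> V' i \<noteq> {}" if "i \<in> J" for i
      using that U'(2) V'(2) ne by (simp add: J_def)
  qed (rule B)
  then obtain n where n: "n \<in> B" "1 \<le> n" "\<forall>i\<in>J. n \<in> return_times (T i) (U' i) (V' i)"
    by blast
  have "n \<in> return_times (T i) (U' i) (V' i)" if "i \<in> I" for i
  proof (cases "i \<in> J")
    case True
    then show ?thesis using n(3) by blast
  next
    case False
    then have "U' i = topspace (X i)" "V' i = topspace (X i)" using that by (auto simp: J_def)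
    moreover have "(T i ^^ n) ` topspace (X i) = topspace (X i)"
      by (rule homeomorphic_imp_surjective_map[OF homeomorphic_map_funpow[OF hom[OF that]]])
    ultimately show ?thesis using ne(1)[OF that] n(2) unfolding return_times_def by auto
  qed
  then have "n \<in> return_times (prod_map I T) (\<Pi>\<^sub>E i\<in>I. U' i) (\<Pi>\<^sub>E i\<in>I. V' i)"
    by (rule return_times_PiE[OF n(2)])
  then have "n \<in> return_times (prod_map I T) U V"
    by (rule subsetD[OF return_times_mono[OF U'(4) V'(4)]])
  then show "return_times (prod_map I T) U V \<inter> B \<noteq> {}" using n(1) by blast
qed

theorem corollary3p8:
  fixes X :: "'i \<Rightarrow> 'a topology" and T :: "'i \<Rightarrow> 'a \<Rightarrow> 'a" and I :: "'i set"
  assumes "\<And>i. i \<in> I \<Longrightarrow> dyn_system (X i) (T i)"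
      and "\<And>i. i \<in> I \<Longrightarrow> mild_mixing (X i) (T i)"
  shows "mild_mixing (product_topology X I) (prod_map I T)
       \<and> compact_space (product_topology X I)
       \<and> homeomorphic_map (product_topology X I) (product_topology X I) (prod_map I T)
       \<and> (countable I \<longrightarrow> dyn_system (product_topology X I) (prod_map I T))"
proof -
  have hom: "\<And>i. i \<in> I \<Longrightarrow> homeomorphic_map (X i) (X i) (T i)"
    and cpt: "\<And>i. i \<in> I \<Longrightarrow> compact_space (X i)"
    and met: "\<And>i. i \<in> I \<Longrightarrow> metrizable_space (X i)"
    using assms(1) by (auto simp: dyn_system_def)
  let ?P = "product_topology X I"
  have C: "compact_space ?P"
    using cpt by (simp add: compact_space_product_topology)
  have H: "homeomorphic_map ?P ?P (prod_map I T)"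
    by (rule homeomorphic_map_prod_map) (rule hom)
  have D: "countable I \<longrightarrow> dyn_system ?P (prod_map I T)"
  proof
    assume "countable I"
    then have "metrizable_space ?P"
      unfolding metrizable_space_product_topology using met
      by (auto intro: countable_subset[of _ I])
    then show "dyn_system ?P (prod_map I T)" using C H by (simp add: dyn_system_def)
  qed
  have MM: "mild_mixing ?P (prod_map I T)"
    using hom assms(2) by (rule mild_mixing_prod_map)
  show ?thesis by (intro conjI MM C H D)
qed

end
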